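(* Let $q>0$, let $I=(i_1,\dots,i_k)$ be an increasing sequence of integers contained in $\{1,\dots,n\}$ and let $\pi\sim\mu_{n,q}$. Then for any integer $1\le b\le n-i_k$, $\pi_I$ and $\pi_{I+b}$ have the same distribution, i.e. $\mathbb{P}(\pi_I=\omega)=\mathbb{P}(\pi_{I+b}=\omega)$ for every $\omega\in S_k$.
   Context: For $q>0$ and $n\ge1$, $\mu_{n,q}(\pi)=q^{\mathrm{inv}(\pi)}/Z_{n,q}$ on $S_n$, with $\mathrm{inv}(\pi)$ the number of pairs $i<j$ with $\pi(i)>\pi(j)$ and $Z_{n,q}$ a normalizing constant. For an increasing sequence $I=(i_1,\dots,i_k)$, $I+b=(i_1+b,\dots,i_k+b)$, and $\pi_I\in S_k$ denotes the induced relative ordering: $\pi_I(j)>\pi_I(j')$ if and only if $\pi(i_j)>\pi(i_{j'})$. *)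

theory Defs
  imports "HOL-Combinatorics.Permutations" Complex_Main
begin

definition perms :: "nat \<Rightarrow> (nat \<Rightarrow> nat) set" where
  "perms n = {p. p permutes {1..n}}"

definition inv_count :: "nat \<Rightarrow> (nat \<Rightarrow> nat) \<Rightarrow> nat" where
  "inv_count n p = card {(i, j). i \<in> {1..n} \<and> j \<in> {1..n} \<and> i < j \<and> p i > p j}"

definition mallows_Z :: "nat \<Rightarrow> real \<Rightarrow> real" where
  "mallows_Z n q = (\<Sum>p\<in>perms n. q ^ inv_count n p)"

definition mallows :: "nat \<Rightarrow> real \<Rightarrow> (nat \<Rightarrow> nat) \<Rightarrow> real" where
  "mallows n q p = q ^ inv_count n p / mallows_Z n q"

text \<open>Induced pattern \<open>\<pi>_I \<in> S_k\<close> for the index list \<open>I = [i_1,\<dots>,i_k]\<close>: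
  position \<open>j \<in> {1..k}\<close> is mapped to the rank of \<open>\<pi>(i_j)\<close> among \<open>\<pi>(i_1),\<dots>,\<pi>(i_k)\<close>.\<close>
definition pattern :: "(nat \<Rightarrow> nat) \<Rightarrow> nat list \<Rightarrow> nat \<Rightarrow> nat" where
  "pattern p I j = (if j \<in> {1..length I}
      then card {j' \<in> {1..length I}. p (I ! (j' - 1)) \<le> p (I ! (j - 1))}
      else j)"

definition pattern_prob :: "nat \<Rightarrow> real \<Rightarrow> nat list \<Rightarrow> (nat \<Rightarrow> nat) \<Rightarrow> real" where
  "pattern_prob n q I \<omega> = (\<Sum>p\<in>{p \<in> perms n. pattern p I = \<omega>}. mallows n q p)"

end

theory Submission
  imports Defs
begin

text \<open>A shift by \<open>b\<close> is \<open>b\<close> shifts by one. For a shift by one, let \<open>\<Phi>\<close> move position \<open>n\<close> of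
  \<open>\<pi>\<close> to the front (the other positions move one to the right), send the value \<open>\<pi>(n)\<close> to
  \<open>n + 1 - \<pi>(n)\<close> and relabel the remaining values order-preservingly. The \<open>n - \<pi>(n)\<close> inversions
  through position \<open>n\<close> of \<open>\<pi>\<close> become the \<open>\<Phi>(\<pi>)(1) - 1 = n - \<pi>(n)\<close> inversions through
  position \<open>1\<close> of \<open>\<Phi>(\<pi>)\<close>, and all other inversions are kept, so \<open>\<Phi>\<close> is a bijection of \<open>S\<^sub>n\<close>
  preserving \<open>\<mu>\<^sub>n\<^sub>,\<^sub>q\<close>; and \<open>\<Phi>(\<pi>)\<^sub>I\<^sub>+\<^sub>1 = \<pi>\<^sub>I\<close> whenever \<open>I\<close> avoids position \<open>n\<close>.\<close>

text \<open>\<open>relabel v w\<close> is the order-preserving bijection from \<open>{1..n} - {v}\<close> onto \<open>{1..n} - {w}\<close>.\<close>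

definition relabel :: "nat \<Rightarrow> nat \<Rightarrow> nat \<Rightarrow> nat" where
  "relabel v w y = (let z = if y < v then y else y - 1 in if z < w then z else z + 1)"

lemma relabel_less_iff:
  assumes "y1 \<noteq> v" "y2 \<noteq> v"
  shows "relabel v w y1 < relabel v w y2 \<longleftrightarrow> y1 < y2"
  using assms unfolding relabel_def Let_def by auto

lemma relabel_eq_iff:
  assumes "y1 \<noteq> v" "y2 \<noteq> v"
  shows "relabel v w y1 = relabel v w y2 \<longleftrightarrow> y1 = y2"
  using relabel_less_iff[OF assms, of w] relabel_less_iff[OF assms(2,1), of w]
  by (metis less_irrefl linorder_neqE_nat)

lemma relabel_in_range:
  assumes "v \<in> {1..n}" "y \<in> {1..n}" "y \<noteq> v"
  shows "relabel v w y \<in> {1..n}" "relabel v w y \<noteq> w"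
  using assms unfolding relabel_def Let_def by auto

definition inversions :: "(nat \<Rightarrow> nat) \<Rightarrow> nat set \<Rightarrow> (nat \<times> nat) set" where
  "inversions p A = {(i, j). i \<in> A \<and> j \<in> A \<and> i < j \<and> p i > p j}"

lemma inv_count_eq_card_inversions: "inv_count n p = card (inversions p {1..n})"
  by (simp add: inv_count_def inversions_def)

lemma finite_inversions: "finite A \<Longrightarrow> finite (inversions p A)"
  by (rule finite_subset[of _ "A \<times> A"]) (auto simp: inversions_def)

lemma card_inversions_insert_max:
  assumes "finite A" "\<forall>a\<in>A. a < m"
  shows "card (inversions p (insert m A)) = card {i\<in>A. p m < p i} + card (inversions p A)"
proof -
  have "inversions p (insert m A) = (\<lambda>i. (i, m)) ` {i\<in>A. p m < p i} \<union> inversions p A"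
    using assms(2) by (auto simp: inversions_def)
  moreover have "(\<lambda>i. (i, m)) ` {i\<in>A. p m < p i} \<inter> inversions p A = {}"
    using assms(2) by (auto simp: inversions_def)
  moreover have "card ((\<lambda>i. (i, m)) ` {i\<in>A. p m < p i}) = card {i\<in>A. p m < p i}"
    by (rule card_image) (auto intro: inj_onI)
  ultimately show ?thesis
    using assms(1) finite_inversions by (simp add: card_Un_disjoint)
qed

lemma card_inversions_insert_min:
  assumes "finite A" "\<forall>a\<in>A. m < a"
  shows "card (inversions p (insert m A)) = card {j\<in>A. p j < p m} + card (inversions p A)"
proof -
  have "inversions p (insert m A) = Pair m ` {j\<in>A. p j < p m} \<union> inversions p A"
    using assms(2) by (auto simp: inversions_def)
  moreover have "Pair m ` {j\<in>A. p j < p m} \<inter> inversions p A = {}"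
    using assms(2) by (auto simp: inversions_def)
  moreover have "card (Pair m ` {j\<in>A. p j < p m}) = card {j\<in>A. p j < p m}"
    by (rule card_image) (auto intro: inj_onI)
  ultimately show ?thesis
    using assms(1) finite_inversions by (simp add: card_Un_disjoint)
qed

lemma card_inversions_Suc_image:
  assumes "\<And>i j. i \<in> A \<Longrightarrow> j \<in> A \<Longrightarrow> g (Suc i) < g (Suc j) \<longleftrightarrow> p i < p j"
  shows "card (inversions g (Suc ` A)) = card (inversions p A)"
proof -
  have "inversions g (Suc ` A) = map_prod Suc Suc ` inversions p A"
    using assms by (fastforce simp: inversions_def)
  moreover have "inj_on (map_prod Suc Suc) (inversions p A)" by (auto intro: inj_onI)
  ultimately show ?thesis by (simp add: card_image)
qed

lemma card_permutes_filter:
  assumes "f permutes S"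
  shows "card {i\<in>S. Q (f i)} = card {y\<in>S. Q y}"
proof -
  have "f ` {i\<in>S. Q (f i)} = {y\<in>S. Q y}"
    using permutes_image[OF assms] by (auto simp: permutes_in_image[OF assms])
  moreover have "inj_on f {i\<in>S. Q (f i)}"
    using permutes_inj[OF assms] by (auto intro: inj_on_subset)
  ultimately show ?thesis by (metis card_image)
qed

lemma card_permutes_greater:
  assumes "p permutes {1..n}"
  shows "card {i\<in>{1..n}. v < p i} = n - v"
proof -
  have "{y\<in>{1..n}. v < y} = {v + 1..n}" by auto
  then show ?thesis using card_permutes_filter[OF assms, of "\<lambda>y. v < y"] by simp
qed

lemma card_permutes_less:
  assumes "p permutes {1..n}" "v \<le> n + 1"
  shows "card {i\<in>{1..n}. p i < v} = v - 1"
proof -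
  have "{y\<in>{1..n}. y < v} = {1..<v}" using assms(2) by auto
  then show ?thesis using card_permutes_filter[OF assms(1), of "\<lambda>y. y < v"] by simp
qed

lemma pattern_map_cong:
  assumes "\<And>i j. i \<in> set I \<Longrightarrow> j \<in> set I \<Longrightarrow> g (h i) \<le> g (h j) \<longleftrightarrow> p i \<le> p j"
  shows "pattern g (map h I) = pattern p I"
proof
  fix j
  have "{j' \<in> {1..length I}. g (map h I ! (j' - 1)) \<le> g (map h I ! (j - 1))}
      = {j' \<in> {1..length I}. p (I ! (j' - 1)) \<le> p (I ! (j - 1))}" if "j \<in> {1..length I}"
    using that by (auto simp: assms)
  then show "pattern g (map h I) j = pattern p I j" by (simp add: pattern_def)
qed

lemma pattern_prob_eq_if_bij:
  assumes bij: "bij_betw F (perms n) (perms n)"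
    and inv: "\<And>p. p \<in> perms n \<Longrightarrow> inv_count n (F p) = inv_count n p"
    and pat: "\<And>p. p \<in> perms n \<Longrightarrow> pattern (F p) J = pattern p I"
  shows "pattern_prob n q I \<omega> = pattern_prob n q J \<omega>"
proof -
  let ?S = "{p \<in> perms n. pattern p I = \<omega>}" and ?T = "{p \<in> perms n. pattern p J = \<omega>}"
  have "F ` ?S = ?T"
    using bij_betw_imp_surj_on[OF bij] pat bij_betwE[OF bij] by (fastforce simp: image_iff)
  then have "bij_betw F ?S ?T" by (rule bij_betw_subset[OF bij, rotated]) auto
  then have "pattern_prob n q J \<omega> = (\<Sum>p\<in>?S. mallows n q (F p))"
    unfolding pattern_prob_def by (rule sum.reindex_bij_betw[symmetric])
  also have "\<dots> = pattern_prob n q I \<omega>"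
    unfolding pattern_prob_def by (rule sum.cong) (simp_all add: mallows_def inv)
  finally show ?thesis ..
qed

lemma atLeastAtMost_1_eq_insert_Suc_image: "n \<ge> 1 \<Longrightarrow> {1..n} = insert 1 (Suc ` {1..<n})"
  by (auto simp: image_iff)

lemma inv_count_split_last:
  assumes "n \<ge> 1" "p permutes {1..n}"
  shows "inv_count n p = (n - p n) + card (inversions p {1..<n})"
proof -
  have split: "{1..n} = insert n {1..<n}" using assms(1) by auto
  have "inv_count n p = card {i\<in>{1..<n}. p n < p i} + card (inversions p {1..<n})"
    unfolding inv_count_eq_card_inversions split by (rule card_inversions_insert_max) auto
  also have "{i\<in>{1..<n}. p n < p i} = {i\<in>{1..n}. p n < p i}"
    unfolding split by auto
  also have "card \<dots> = n - p n"
    by (rule card_permutes_greater[OF assms(2)])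
  finally show ?thesis by simp
qed

lemma inv_count_split_first:
  assumes "n \<ge> 1" "p permutes {1..n}"
  shows "inv_count n p = (p 1 - 1) + card (inversions p (Suc ` {1..<n}))"
proof -
  let ?A = "Suc ` {1..<n}"
  note split = atLeastAtMost_1_eq_insert_Suc_image[OF assms(1)]
  have "inv_count n p = card {j\<in>?A. p j < p 1} + card (inversions p ?A)"
    unfolding inv_count_eq_card_inversions split by (rule card_inversions_insert_min) auto
  also have "{j\<in>?A. p j < p 1} = {j\<in>{1..n}. p j < p 1}"
    unfolding split by (auto simp del: image_Suc_atLeastLessThan)
  also have "card \<dots> = p 1 - 1"
    using assms permutes_in_image[OF assms(2), of 1] by (intro card_permutes_less) auto
  finally show ?thesis by simp
qed

definition shift_perm :: "nat \<Rightarrow> (nat \<Rightarrow> nat) \<Rightarrow> nat \<Rightarrow> nat" where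
  "shift_perm n p x = (if x = 1 then n + 1 - p n
     else if x \<in> {2..n} then relabel (p n) (n + 1 - p n) (p (x - 1)) else x)"

context
  fixes n :: nat and p :: "nat \<Rightarrow> nat"
  assumes n: "n \<ge> 1" and p: "p permutes {1..n}"
begin

lemma permutes_last_in: "p n \<in> {1..n}"
  using n permutes_in_image[OF p, of n] by simp

lemma permutes_not_last:
  assumes "x \<in> {1..<n}" shows "p x \<in> {1..n}" "p x \<noteq> p n"
  using assms permutes_in_image[OF p, of x] permutes_inj[OF p] by (auto dest: injD)

lemma shift_perm_1: "shift_perm n p 1 = n + 1 - p n"
  by (simp add: shift_perm_def)

lemma shift_perm_Suc:
  "x \<in> {1..<n} \<Longrightarrow> shift_perm n p (Suc x) = relabel (p n) (n + 1 - p n) (p x)"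
  by (simp add: shift_perm_def)

lemma shift_perm_Suc_less_iff:
  "x \<in> {1..<n} \<Longrightarrow> y \<in> {1..<n} \<Longrightarrow> shift_perm n p (Suc x) < shift_perm n p (Suc y) \<longleftrightarrow> p x < p y"
  by (simp add: shift_perm_Suc relabel_less_iff permutes_not_last)

lemma shift_perm_Suc_eq_iff:
  "x \<in> {1..<n} \<Longrightarrow> y \<in> {1..<n} \<Longrightarrow> shift_perm n p (Suc x) = shift_perm n p (Suc y) \<longleftrightarrow> p x = p y"
  by (simp add: shift_perm_Suc relabel_eq_iff permutes_not_last)

lemma shift_perm_Suc_in_range:
  assumes "x \<in> {1..<n}"
  shows "shift_perm n p (Suc x) \<in> {1..n}" "shift_perm n p (Suc x) \<noteq> n + 1 - p n"
  using relabel_in_range[OF permutes_last_in permutes_not_last(1,2)[OF assms]]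
  by (simp_all add: shift_perm_Suc[OF assms])

lemma shift_perm_permutes: "shift_perm n p permutes {1..n}"
proof (rule bij_imp_permutes)
  have "inj_on (shift_perm n p \<circ> Suc) {1..<n}"
    by (rule inj_onI) (simp add: shift_perm_Suc_eq_iff injD[OF permutes_inj[OF p]])
  then have "inj_on (shift_perm n p) (Suc ` {1..<n})"
    by (rule inj_on_imageI)
  moreover have "shift_perm n p 1 \<notin> shift_perm n p ` Suc ` {1..<n}"
  proof
    assume "shift_perm n p 1 \<in> shift_perm n p ` Suc ` {1..<n}"
    then obtain x where "x \<in> {1..<n}" "shift_perm n p (Suc x) = shift_perm n p 1" by (metis imageE)
    then show False using shift_perm_Suc_in_range(2) unfolding shift_perm_1 by blast
  qed
  ultimately have inj: "inj_on (shift_perm n p) {1..n}"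
    unfolding atLeastAtMost_1_eq_insert_Suc_image[OF n] by simp
  moreover have "shift_perm n p ` {1..n} \<subseteq> {1..n}"
  proof -
    have "shift_perm n p 1 \<in> {1..n}" using permutes_last_in unfolding shift_perm_1 by auto
    then show ?thesis
      using shift_perm_Suc_in_range(1) unfolding atLeastAtMost_1_eq_insert_Suc_image[OF n] by blast
  qed
  ultimately show "bij_betw (shift_perm n p) {1..n} {1..n}"
    by (simp add: bij_betw_def endo_inj_surj)
  show "x \<notin> {1..n} \<Longrightarrow> shift_perm n p x = x" for x
    using n by (auto simp: shift_perm_def)
qed

lemma inv_count_shift_perm: "inv_count n (shift_perm n p) = inv_count n p"
proof -
  have "inv_count n (shift_perm n p)
      = (shift_perm n p 1 - 1) + card (inversions (shift_perm n p) (Suc ` {1..<n}))"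
    by (rule inv_count_split_first[OF n shift_perm_permutes])
  also have "shift_perm n p 1 - 1 = n - p n"
    unfolding shift_perm_1 using permutes_last_in by simp
  also have "card (inversions (shift_perm n p) (Suc ` {1..<n})) = card (inversions p {1..<n})"
    by (rule card_inversions_Suc_image) (rule shift_perm_Suc_less_iff)
  also have "n - p n + card (inversions p {1..<n}) = inv_count n p"
    by (rule inv_count_split_last[OF n p, symmetric])
  finally show ?thesis .
qed

lemma pattern_shift_perm:
  assumes "set I \<subseteq> {1..<n}"
  shows "pattern (shift_perm n p) (map Suc I) = pattern p I"
proof (rule pattern_map_cong)
  fix i j assume "i \<in> set I" "j \<in> set I"
  then have "i \<in> {1..<n}" "j \<in> {1..<n}" using assms by auto
  then show "shift_perm n p (Suc i) \<le> shift_perm n p (Suc j) \<longleftrightarrow> p i \<le> p j"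
    using shift_perm_Suc_less_iff[of j i] by (simp add: not_less[symmetric])
qed

end

lemma inj_on_shift_perm:
  assumes n: "n \<ge> 1"
  shows "inj_on (shift_perm n) (perms n)"
proof (rule inj_onI)
  fix p p' assume "p \<in> perms n" "p' \<in> perms n" and eq: "shift_perm n p = shift_perm n p'"
  then have p: "p permutes {1..n}" and p': "p' permutes {1..n}" by (auto simp: perms_def)
  have last: "p n = p' n"
    using fun_cong[OF eq, of 1] permutes_last_in[OF n p] permutes_last_in[OF n p']
    unfolding shift_perm_1[OF n p] shift_perm_1[OF n p'] by auto
  have "p x = p' x" for x
  proof (cases "x \<in> {1..<n}")
    case True
    then have "relabel (p n) (n + 1 - p n) (p x) = relabel (p n) (n + 1 - p n) (p' x)"
      using fun_cong[OF eq, of "Suc x"]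
      unfolding shift_perm_Suc[OF n p True] shift_perm_Suc[OF n p' True] last by simp
    then show ?thesis
      using relabel_eq_iff permutes_not_last(2)[OF n p True] permutes_not_last(2)[OF n p' True] last
      by metis
  next
    case False
    then have "x = n \<or> x \<notin> {1..n}" by auto
    then show ?thesis using last permutes_not_in[OF p] permutes_not_in[OF p'] by auto
  qed
  then show "p = p'" ..
qed

lemma bij_betw_shift_perm:
  assumes "n \<ge> 1"
  shows "bij_betw (shift_perm n) (perms n) (perms n)"
proof -
  have "shift_perm n ` perms n = perms n"
    by (rule endo_inj_surj) (use inj_on_shift_perm[OF assms] shift_perm_permutes[OF assms]
        finite_permutations[of "{1..n}"] in \<open>auto simp: perms_def\<close>)
  then show ?thesis using inj_on_shift_perm[OF assms] by (simp add: bij_betw_def)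
qed

lemma pattern_prob_map_Suc:
  assumes "set I \<subseteq> {1..<n}"
  shows "pattern_prob n q I \<omega> = pattern_prob n q (map Suc I) \<omega>"
proof (cases "n = 0")
  case False
  then have n: "n \<ge> 1" by simp
  show ?thesis
    by (rule pattern_prob_eq_if_bij[OF bij_betw_shift_perm[OF n]])
       (simp_all add: perms_def inv_count_shift_perm[OF n] pattern_shift_perm[OF n _ assms])
qed (use assms in simp)

lemma pattern_prob_map_add:
  assumes "set I \<subseteq> {1..n - b}"
  shows "pattern_prob n q I \<omega> = pattern_prob n q (map (\<lambda>i. i + b) I) \<omega>"
  using assms
proof (induction b)
  case (Suc b)
  have "pattern_prob n q I \<omega> = pattern_prob n q (map (\<lambda>i. i + b) I) \<omega>"
    using Suc by force
  also have "\<dots> = pattern_prob n q (map Suc (map (\<lambda>i. i + b) I)) \<omega>"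
  proof (rule pattern_prob_map_Suc)
    have "i + b < n" if "i \<in> set I" for i
      using Suc.prems that by fastforce
    then show "set (map (\<lambda>i. i + b) I) \<subseteq> {1..<n}"
      using Suc.prems by fastforce
  qed
  finally show ?case by (simp add: comp_def)
qed simp

lemma sorted_wrt_less_le_last:
  fixes xs :: "'a::order list"
  assumes "sorted_wrt (<) xs" "x \<in> set xs"
  shows "x \<le> last xs"
proof -
  obtain i where i: "i < length xs" "x = xs ! i" using assms(2) by (auto simp: in_set_conv_nth)
  then have last: "last xs = xs ! (length xs - 1)" by (cases xs) (auto simp: last_conv_nth)
  show ?thesis
  proof (cases "i = length xs - 1")
    case False
    then have "xs ! i < xs ! (length xs - 1)"
      using i by (intro sorted_wrt_nth_less[OF assms(1)]) auto
    then show ?thesis using i last by simp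
  qed (use i last in simp)
qed

theorem lemma2p6:
  fixes n b :: nat and q :: real and I :: "nat list" and \<omega> :: "nat \<Rightarrow> nat"
  assumes "q > 0" and "n \<ge> 1"
    and "I \<noteq> []" and "sorted_wrt (<) I" and "set I \<subseteq> {1..n}"
    and "1 \<le> b" and "b \<le> n - last I"
    and "\<omega> permutes {1..length I}"
  shows "pattern_prob n q I \<omega> = pattern_prob n q (map (\<lambda>i. i + b) I) \<omega>"
proof (rule pattern_prob_map_add)
  show "set I \<subseteq> {1..n - b}"
    using sorted_wrt_less_le_last[OF assms(4)] assms(3,5,7) last_in_set[OF assms(3)] by fastforce
qed

end
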